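(* Let $F_2$ be the free group on generators $a,b$, let $H\leq F_2$ be a subgroup of finite index that contains an element of odd length, and let $y\in F_2$. Then there exist constants $a_{i,xH}$ (for $i\geq 1$, $xH\in F_2/H$) and an $N\in\mathbb{N}$ such that \[ |yH\cap S_n| = \sum_{i=1}^{N}\sum_{xH\in F_2/H}a_{i,xH}\cdot |xH\cap S_{n-i}| \] for all $n\geq N+1$.
   Context: Let $\Xi=\{a,b,a^{-1},b^{-1}\}$. An element $g\in F_2$ has length $n$ if $g=x_1x_2\cdots x_n$ with $x_i\in\Xi$ and $x_{i+1}\neq x_i^{-1}$ for each $i$ (reduced form); the identity has length $0$. For $n\geq 0$, $S_n\subseteq F_2$ denotes the set of elements of length $n$. The constants $a_{i,xH}$ and $N$ do not depend on $n$. *)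

theory Defs
  imports Complex_Main "HOL-Algebra.Coset"
begin

text \<open>The free group F_2 on generators a, b, modelled by reduced words.
A letter is a pair (g, e): generator g with e = True meaning the inverse g^-1.\<close>

datatype gen = Ga | Gb

type_synonym letter = "gen \<times> bool"

definition inv_letter :: "letter \<Rightarrow> letter" where
  "inv_letter x = (fst x, \<not> snd x)"

fun reduced :: "letter list \<Rightarrow> bool" where
  "reduced [] = True"
| "reduced [x] = True"
| "reduced (x # y # xs) = (y \<noteq> inv_letter x \<and> reduced (y # xs))"

fun red_cons :: "letter \<Rightarrow> letter list \<Rightarrow> letter list" where
  "red_cons x [] = [x]"
| "red_cons x (y # ys) = (if y = inv_letter x then ys else x # y # ys)"

definition reduce :: "letter list \<Rightarrow> letter list" where
  "reduce w = foldr red_cons w []"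

definition F2 :: "letter list monoid" where
  "F2 = \<lparr> carrier = {w. reduced w}, monoid.mult = (\<lambda>w v. reduce (w @ v)), one = [] \<rparr>"

definition sphere :: "nat \<Rightarrow> letter list set" where
  "sphere n = {w \<in> carrier F2. length w = n}"

definition left_cosets :: "letter list set \<Rightarrow> letter list set set" where
  "left_cosets H = {x <#\<^bsub>F2\<^esub> H | x. x \<in> carrier F2}"

end

theory Submission
  imports Defs
begin

text \<open>Count words by how their length changes under left multiplication by a letter m. For a
set D of reduced words and n \<ge> 3, the words of length n - 1 in mD come exactly from the words
of D of length n starting with m^-1 and from the words of D of length n - 2 not starting
with m^-1. Summing over the four letters, every word of D of length n is counted once and every
word of length n - 2 three times:
  \<Sum>_m |mD \<inter> S_(n-1)| = |D \<inter> S_n| + 3 |D \<inter> S_(n-2)|.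
For D = yH every mD = (my)H is again a left coset, so this is a recurrence of order 2 with
coefficients a_(1,xH) = #{m. myH = xH} and a_(2,yH) = -3. It holds for every subgroup
of finite index.\<close>

lemma UNIV_gen: "(UNIV :: gen set) = {Ga, Gb}"
  using gen.exhaust by auto

instance gen :: finite
  by standard (simp add: UNIV_gen)

lemma card_UNIV_letter: "card (UNIV :: letter set) = 4"
  by (simp add: UNIV_Times_UNIV[symmetric] card_cartesian_product UNIV_gen del: UNIV_Times_UNIV)

lemma inv_letter_inv_letter [simp]: "inv_letter (inv_letter x) = x"
  by (simp add: inv_letter_def)

lemma inv_letter_neq [simp]: "inv_letter x \<noteq> x"
  by (cases x) (simp add: inv_letter_def)

lemma reduced_ConsD: "reduced (x # w) \<Longrightarrow> reduced w"
  by (cases w) auto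

lemma reduced_red_cons: "reduced w \<Longrightarrow> reduced (red_cons m w)"
  by (cases w) (auto dest: reduced_ConsD)

lemma red_cons_inv_letter_cancel:
  assumes "reduced w"
  shows "red_cons (inv_letter m) (red_cons m w) = w"
proof (cases w)
  case (Cons z zs)
  then show ?thesis
    using assms by (cases zs) auto
qed simp

lemma reduced_foldr_red_cons: "reduced w \<Longrightarrow> reduced (foldr red_cons v w)"
  by (induction v) (auto intro: reduced_red_cons)

lemma reduce_reduced_eq: "reduced w \<Longrightarrow> reduce w = w"
proof (induction w)
  case (Cons x w)
  then have "reduce w = w"
    by (auto dest: reduced_ConsD)
  then show ?case
    using Cons.prems by (cases w) (auto simp: reduce_def)
qed (simp add: reduce_def)

lemma foldr_red_cons_red_cons:
  assumes "reduced v" "reduced w"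
  shows "foldr red_cons (red_cons x v) w = red_cons x (foldr red_cons v w)"
proof (cases v)
  case (Cons z zs)
  have "reduced (foldr red_cons zs w)"
    using assms(2) by (rule reduced_foldr_red_cons)
  then show ?thesis
    using Cons red_cons_inv_letter_cancel[of "foldr red_cons zs w" z] by auto
qed simp

lemma reduce_append: "reduce (v @ w) = foldr red_cons v (reduce w)"
  by (simp add: reduce_def)

lemma l_coset_F2_eq:
  assumes "H \<subseteq> carrier F2"
  shows "y <#\<^bsub>F2\<^esub> H = foldr red_cons y ` H"
  using assms by (auto simp: l_coset_def F2_def reduce_append reduce_reduced_eq subset_iff)

lemma l_coset_F2_subset:
  "reduced y \<Longrightarrow> H \<subseteq> carrier F2 \<Longrightarrow> y <#\<^bsub>F2\<^esub> H \<subseteq> carrier F2"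
  using l_coset_F2_eq[of H y] by (auto simp: F2_def subset_iff intro: reduced_foldr_red_cons)

lemma red_cons_image_l_coset:
  assumes "reduced y" "H \<subseteq> carrier F2"
  shows "red_cons m ` (y <#\<^bsub>F2\<^esub> H) = red_cons m y <#\<^bsub>F2\<^esub> H"
proof -
  have "red_cons m ` (y <#\<^bsub>F2\<^esub> H) = (\<lambda>h. red_cons m (foldr red_cons y h)) ` H"
    using assms(2) by (simp add: l_coset_F2_eq image_image)
  also have "\<dots> = foldr red_cons (red_cons m y) ` H"
    using assms(2) foldr_red_cons_red_cons[OF assms(1)] by (auto simp: F2_def subset_iff)
  finally show ?thesis
    using assms(2) by (simp add: l_coset_F2_eq)
qed

lemma inj_on_red_cons: "inj_on (red_cons m) (carrier F2)"
  by (rule inj_on_inverseI[where g = "red_cons (inv_letter m)"])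
    (auto simp: F2_def red_cons_inv_letter_cancel)

lemma finite_sphere: "finite (sphere n)"
proof (rule finite_subset)
  show "sphere n \<subseteq> {w. set w \<subseteq> UNIV \<and> length w = n}"
    by (auto simp: sphere_def)
qed (rule finite_lists_length_eq, simp)

lemma length_red_cons:
  "length (red_cons m w) = (if w \<noteq> [] \<and> hd w = inv_letter m then length w - 1 else length w + 1)"
  by (cases w) auto

lemma card_letters_shortening:
  "w \<noteq> [] \<Longrightarrow> card {m. length (red_cons m w) = length w - 1} = 1"
proof -
  assume "w \<noteq> []"
  then have "{m. length (red_cons m w) = length w - 1} = {inv_letter (hd w)}"
    by (auto simp: length_red_cons)
  then show ?thesis by simp
qed

lemma card_letters_lengthening:
  "w \<noteq> [] \<Longrightarrow> card {m. length (red_cons m w) = length w + 1} = 3"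
proof -
  assume "w \<noteq> []"
  then have "{m. length (red_cons m w) = length w + 1} = UNIV - {inv_letter (hd w)}"
    by (auto simp: length_red_cons)
  then show ?thesis
    by (simp add: card_Diff_singleton card_UNIV_letter)
qed

lemma sum_card_red_cons_image_sphere:
  assumes D: "D \<subseteq> carrier F2" and n: "n \<ge> 3"
  shows "(\<Sum>m\<in>UNIV. card (red_cons m ` D \<inter> sphere (n - 1)))
           = card (D \<inter> sphere n) + 3 * card (D \<inter> sphere (n - 2))"
proof -
  define E where "E = D \<inter> sphere n \<union> D \<inter> sphere (n - 2)"
  define P where "P m w \<longleftrightarrow> length (red_cons m w) = n - 1" for m w
  have finite_E: "finite E"
    by (simp add: E_def finite_sphere)
  have "red_cons m ` D \<inter> sphere (n - 1) = red_cons m ` {w \<in> E. P m w}" for m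
    using D n
    by (auto simp: E_def P_def sphere_def F2_def length_red_cons reduced_red_cons
        split: if_splits)
  moreover have "inj_on (red_cons m) {w \<in> E. P m w}" for m
    by (rule inj_on_subset[OF inj_on_red_cons]) (use D in \<open>auto simp: E_def\<close>)
  ultimately have "(\<Sum>m\<in>UNIV. card (red_cons m ` D \<inter> sphere (n - 1)))
                   = (\<Sum>m\<in>UNIV. card {w \<in> E. P m w})"
    by (simp add: card_image)
  also have "\<dots> = (\<Sum>w\<in>E. if length w = n then 1 else 3)"
  proof (rule sum_multicount_gen)
    have "card {m. P m w} = (if length w = n then 1 else 3)" if "w \<in> E" for w
    proof (cases "length w = n")
      case True
      then have "w \<noteq> []"
        using n by auto
      then show ?thesis
        using True card_letters_shortening[of w] by (simp add: P_def)
    next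
      case False
      then have "length w = n - 2"
        using that by (auto simp: E_def sphere_def)
      then have "n - 1 = length w + 1" "w \<noteq> []"
        using n by auto
      then show ?thesis
        using False card_letters_lengthening[of w] by (simp add: P_def)
    qed
    then show "\<forall>w\<in>E. card {m \<in> UNIV. P m w} = (if length w = n then 1 else 3)"
      by simp
  qed (simp_all add: finite_E)
  also have "\<dots> = card (D \<inter> sphere n) + 3 * card (D \<inter> sphere (n - 2))"
  proof -
    have "D \<inter> sphere n \<inter> (D \<inter> sphere (n - 2)) = {}" "n - 2 \<noteq> n"
      using n by (auto simp: sphere_def)
    then show ?thesis
      unfolding E_def by (simp add: sum.union_disjoint finite_sphere) (simp add: sphere_def)
  qed
  finally show ?thesis .
qed

lemma card_l_coset_sphere_recurrence:
  assumes "subgroup H F2" "y \<in> carrier F2" "n \<ge> 3"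
  shows "card ((y <#\<^bsub>F2\<^esub> H) \<inter> sphere n) + 3 * card ((y <#\<^bsub>F2\<^esub> H) \<inter> sphere (n - 2))
           = (\<Sum>m\<in>UNIV. card ((red_cons m y <#\<^bsub>F2\<^esub> H) \<inter> sphere (n - 1)))"
proof -
  have "reduced y"
    using assms(2) by (simp add: F2_def)
  moreover have "H \<subseteq> carrier F2"
    using assms(1) by (rule subgroup.subset)
  ultimately show ?thesis
    using sum_card_red_cons_image_sphere[OF l_coset_F2_subset assms(3)]
    by (simp add: red_cons_image_l_coset)
qed

lemma sum_card_fibres:
  assumes "finite A" "finite B" "f ` A \<subseteq> B"
  shows "(\<Sum>b\<in>B. of_nat (card {a \<in> A. f a = b}) * g b) = (\<Sum>a\<in>A. g (f a))"
proof -
  have "(\<Sum>b\<in>B. of_nat (card {a \<in> A. f a = b}) * g b) = (\<Sum>b\<in>B. \<Sum>a\<in>{a \<in> A. f a = b}. g (f a))"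
    by (intro sum.cong) auto
  also have "\<dots> = (\<Sum>a\<in>A. g (f a))"
    using assms by (rule sum.group)
  finally show ?thesis .
qed

theorem theorem1p2:
  fixes H :: "letter list set" and y :: "letter list"
  assumes "subgroup H F2"
    and "finite (left_cosets H)"
    and "\<exists>h\<in>H. odd (length h)"
    and "y \<in> carrier F2"
  shows "\<exists>(c :: nat \<Rightarrow> letter list set \<Rightarrow> real) (N :: nat).
           \<forall>n \<ge> N + 1.
             real (card ((y <#\<^bsub>F2\<^esub> H) \<inter> sphere n)) =
             (\<Sum>i = 1..N. \<Sum>C \<in> left_cosets H. c i C * real (card (C \<inter> sphere (n - i))))"
proof -
  define f where "f m = red_cons m y <#\<^bsub>F2\<^esub> H" for m
  define c :: "nat \<Rightarrow> letter list set \<Rightarrow> real" where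
    "c i C = (if i = 1 then card {m. f m = C} else if i = 2 \<and> C = y <#\<^bsub>F2\<^esub> H then -3 else 0)"
    for i C
  have f_coset: "range f \<subseteq> left_cosets H"
    using assms(4) by (auto simp: f_def left_cosets_def F2_def intro: reduced_red_cons)
  have y_coset: "y <#\<^bsub>F2\<^esub> H \<in> left_cosets H"
    using assms(4) by (auto simp: left_cosets_def)
  have "real (card ((y <#\<^bsub>F2\<^esub> H) \<inter> sphere n)) =
          (\<Sum>i = 1..2. \<Sum>C \<in> left_cosets H. c i C * real (card (C \<inter> sphere (n - i))))"
    if "n \<ge> 3" for n
  proof -
    have "real (card ((y <#\<^bsub>F2\<^esub> H) \<inter> sphere n) + 3 * card ((y <#\<^bsub>F2\<^esub> H) \<inter> sphere (n - 2)))
          = real (\<Sum>m\<in>UNIV. card (f m \<inter> sphere (n - 1)))"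
      using card_l_coset_sphere_recurrence[OF assms(1,4) that] by (simp add: f_def)
    moreover have "(\<Sum>C \<in> left_cosets H. c 1 C * real (card (C \<inter> sphere (n - 1))))
                   = (\<Sum>m\<in>UNIV. real (card (f m \<inter> sphere (n - 1))))"
      using sum_card_fibres[of UNIV "left_cosets H" f "\<lambda>C. real (card (C \<inter> sphere (n - 1)))"]
      by (simp add: c_def assms(2) f_coset)
    moreover have "(\<Sum>C \<in> left_cosets H. c 2 C * real (card (C \<inter> sphere (n - 2))))
                   = - 3 * real (card ((y <#\<^bsub>F2\<^esub> H) \<inter> sphere (n - 2)))"
      using assms(2) y_coset by (simp add: c_def sum.remove)
    moreover have "{1..2 :: nat} = {1, 2}"
      by auto
    ultimately show ?thesis
      by simp
  qed
  then show ?thesis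
    by (intro exI[of _ c] exI[of _ 2]) simp
qed

end
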